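(* Let $G_1,G_2$ be ordered cores. If there is an order-preserving homomorphism from $G_1$ to $G_2$ and an order-preserving homomorphism from $G_2$ to $G_1$, then there is an order-preserving isomorphism between $G_1$ and $G_2$.
   Context: All graphs are undirected with vertex sets that are subsets of $\mathbb{N}$ (so linearly ordered); subgraphs inherit the vertex labels. An order-preserving homomorphism from $G$ to $G'$ is a map $f:V(G)\to V(G')$ with $f(i)\le f(j)$ whenever $i\le j$ and $\{f(i),f(j)\}\in E(G')$ for every $\{i,j\}\in E(G)$. An order-preserving isomorphism is an order-preserving homomorphism that is a graph isomorphism. The ordered core of $G$ is a subgraph of $G$ with the smallest number of vertices among subgraphs to which $G$ has an order-preserving homomorphism; $G$ is an ordered core if it is the ordered core of itself (i.e. there is no order-preserving homomorphism from $G$ to a subgraph of $G$ with fewer vertices). *)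

theory Defs
  imports Main
begin

type_synonym ograph = "nat set \<times> nat set set"

definition verts :: "ograph \<Rightarrow> nat set" where "verts G = fst G"
definition edges :: "ograph \<Rightarrow> nat set set" where "edges G = snd G"

definition is_graph :: "ograph \<Rightarrow> bool" where
  "is_graph G \<longleftrightarrow> finite (verts G) \<and>
     (\<forall>e\<in>edges G. \<exists>i j. i \<in> verts G \<and> j \<in> verts G \<and> i \<noteq> j \<and> e = {i, j})"

definition subgraph :: "ograph \<Rightarrow> ograph \<Rightarrow> bool" where
  "subgraph H G \<longleftrightarrow> is_graph H \<and> verts H \<subseteq> verts G \<and> edges H \<subseteq> edges G"

definition op_hom :: "ograph \<Rightarrow> ograph \<Rightarrow> (nat \<Rightarrow> nat) \<Rightarrow> bool" where
  "op_hom G G' f \<longleftrightarrow> f ` verts G \<subseteq> verts G' \<and>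
     (\<forall>i\<in>verts G. \<forall>j\<in>verts G. i \<le> j \<longrightarrow> f i \<le> f j) \<and>
     (\<forall>i j. {i, j} \<in> edges G \<longrightarrow> {f i, f j} \<in> edges G')"

definition op_iso :: "ograph \<Rightarrow> ograph \<Rightarrow> (nat \<Rightarrow> nat) \<Rightarrow> bool" where
  "op_iso G G' f \<longleftrightarrow> op_hom G G' f \<and> bij_betw f (verts G) (verts G') \<and>
     (\<forall>i\<in>verts G. \<forall>j\<in>verts G. {f i, f j} \<in> edges G' \<longrightarrow> {i, j} \<in> edges G)"

definition ordered_core :: "ograph \<Rightarrow> bool" where
  "ordered_core G \<longleftrightarrow> is_graph G \<and>
     \<not> (\<exists>H f. subgraph H G \<and> card (verts H) < card (verts G) \<and> op_hom G H f)"

end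

theory Submission
  imports Defs
begin

text \<open>Composing the two homomorphisms gives an endomorphism of each core. Its image is a
  subgraph admitting a homomorphism from the core, so by minimality it has all the vertices:
  the endomorphism, and hence each of the two homomorphisms, is injective on vertices.
  Injective homomorphisms in both directions force equal numbers of vertices and of edges,
  so the injective homomorphism maps the vertex set onto the vertex set and the edge set
  onto the edge set, which makes it an order-preserving isomorphism.\<close>

lemma is_graph_edge_subset:
  assumes "is_graph G" and "e \<in> edges G"
  shows "e \<subseteq> verts G"
  using assms unfolding is_graph_def by fastforce

lemma is_graph_finite_edges:
  assumes "is_graph G"
  shows "finite (edges G)"
proof (rule finite_subset)
  show "edges G \<subseteq> Pow (verts G)" using is_graph_edge_subset[OF assms] by blast
  show "finite (Pow (verts G))" using assms unfolding is_graph_def by simp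
qed

lemma op_hom_comp:
  assumes "op_hom G1 G2 f" and "op_hom G2 G3 g"
  shows "op_hom G1 G3 (g \<circ> f)"
  using assms unfolding op_hom_def by (auto simp: image_subset_iff)

lemma op_hom_edge_image:
  assumes "is_graph G" and "op_hom G G' f"
  shows "(`) f ` edges G \<subseteq> edges G'"
proof
  fix e assume "e \<in> (`) f ` edges G"
  then obtain e0 where e0: "e0 \<in> edges G" "e = f ` e0" by blast
  then obtain i j where "e0 = {i, j}" using assms(1) unfolding is_graph_def by blast
  then show "e \<in> edges G'" using e0 assms(2) unfolding op_hom_def by simp
qed

definition hom_image :: "ograph \<Rightarrow> (nat \<Rightarrow> nat) \<Rightarrow> ograph" where
  "hom_image G h = (h ` verts G, (`) h ` edges G)"

lemma verts_hom_image [simp]: "verts (hom_image G h) = h ` verts G"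
  and edges_hom_image [simp]: "edges (hom_image G h) = (`) h ` edges G"
  by (simp_all add: hom_image_def verts_def edges_def)

lemma subgraph_hom_image:
  assumes "is_graph G" and "is_graph G'" and "op_hom G G' h"
  shows "subgraph (hom_image G h) G'"
  unfolding subgraph_def
proof (intro conjI)
  show "verts (hom_image G h) \<subseteq> verts G'" using assms(3) unfolding op_hom_def by simp
  show edges_sub: "edges (hom_image G h) \<subseteq> edges G'"
    using op_hom_edge_image[OF assms(1,3)] by simp
  show "is_graph (hom_image G h)"
    unfolding is_graph_def
  proof (intro conjI ballI)
    show "finite (verts (hom_image G h))" using assms(1) unfolding is_graph_def by simp
    fix e assume e: "e \<in> edges (hom_image G h)"
    then obtain e0 where e0: "e0 \<in> edges G" "e = h ` e0" by auto
    then obtain i j where ij: "i \<in> verts G" "j \<in> verts G" "e0 = {i, j}"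
      using assms(1) unfolding is_graph_def by blast
    have "{h i, h j} \<in> edges G'" using e e0(2) ij(3) edges_sub by auto
    then obtain a b where "a \<noteq> b" "{h i, h j} = {a, b}"
      using assms(2) unfolding is_graph_def by blast
    then have "h i \<noteq> h j" by (auto simp: doubleton_eq_iff)
    then show "\<exists>i' j'. i' \<in> verts (hom_image G h) \<and> j' \<in> verts (hom_image G h) \<and>
        i' \<noteq> j' \<and> e = {i', j'}"
      using ij e0(2) by (intro exI[of _ "h i"] exI[of _ "h j"]) simp
  qed
qed

lemma op_hom_onto_hom_image:
  assumes "op_hom G G' h"
  shows "op_hom G (hom_image G h) h"
  using assms unfolding op_hom_def by (auto intro!: image_eqI[where x = "{_, _}"])

lemma ordered_core_endo_inj:
  assumes core: "ordered_core G" and h: "op_hom G G h"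
  shows "inj_on h (verts G)"
proof -
  have G: "is_graph G" and fin: "finite (verts G)"
    using core unfolding ordered_core_def is_graph_def by auto
  have "\<not> card (verts (hom_image G h)) < card (verts G)"
    using core subgraph_hom_image[OF G G h] op_hom_onto_hom_image[OF h]
    unfolding ordered_core_def by blast
  then have "card (h ` verts G) = card (verts G)"
    using card_image_le[OF fin, of h] by simp
  then show ?thesis using fin by (simp add: eq_card_imp_inj_on)
qed

lemma ordered_core_hom_inj:
  assumes "ordered_core G1" and "op_hom G1 G2 f" and "op_hom G2 G1 g"
  shows "inj_on f (verts G1)"
proof -
  have "inj_on (g \<circ> f) (verts G1)"
    using ordered_core_endo_inj[OF assms(1) op_hom_comp[OF assms(2,3)]] .
  then show ?thesis by (rule inj_on_imageI2)
qed

lemma inj_op_hom_edge_map_inj: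
  assumes "is_graph G" and "inj_on f (verts G)"
  shows "inj_on ((`) f) (edges G)"
proof (rule inj_on_subset)
  show "inj_on ((`) f) (Pow (verts G))" using assms(2) by (rule inj_on_image_Pow)
  show "edges G \<subseteq> Pow (verts G)" using is_graph_edge_subset[OF assms(1)] by blast
qed

lemma inj_op_hom_card_le:
  assumes "is_graph G1" and "is_graph G2" and f: "op_hom G1 G2 f"
    and inj: "inj_on f (verts G1)"
  shows "card (verts G1) \<le> card (verts G2)" and "card (edges G1) \<le> card (edges G2)"
proof -
  have "f ` verts G1 \<subseteq> verts G2" using f unfolding op_hom_def by simp
  then show "card (verts G1) \<le> card (verts G2)"
    using card_inj_on_le[OF inj] assms(2) unfolding is_graph_def by blast
  show "card (edges G1) \<le> card (edges G2)"
    using card_inj_on_le[OF inj_op_hom_edge_map_inj[OF assms(1) inj]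
        op_hom_edge_image[OF assms(1) f] is_graph_finite_edges[OF assms(2)]] .
qed

lemma inj_op_hom_is_op_iso:
  assumes G1: "is_graph G1" and G2: "is_graph G2" and f: "op_hom G1 G2 f"
    and inj: "inj_on f (verts G1)"
    and card_verts: "card (verts G2) \<le> card (verts G1)"
    and card_edges: "card (edges G2) \<le> card (edges G1)"
  shows "op_iso G1 G2 f"
  unfolding op_iso_def
proof (intro conjI ballI impI)
  show "op_hom G1 G2 f" by (fact f)
  have "f ` verts G1 = verts G2"
  proof (rule card_subset_eq)
    show "finite (verts G2)" using G2 unfolding is_graph_def by simp
    show "f ` verts G1 \<subseteq> verts G2" using f unfolding op_hom_def by simp
    show "card (f ` verts G1) = card (verts G2)"
      using card_image[OF inj] inj_op_hom_card_le(1)[OF G1 G2 f inj] card_verts by simp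
  qed
  then show "bij_betw f (verts G1) (verts G2)" using inj unfolding bij_betw_def by simp
  have inj_edges: "inj_on ((`) f) (edges G1)" by (rule inj_op_hom_edge_map_inj[OF G1 inj])
  have edges_onto: "(`) f ` edges G1 = edges G2"
  proof (rule card_subset_eq)
    show "finite (edges G2)" by (rule is_graph_finite_edges[OF G2])
    show "(`) f ` edges G1 \<subseteq> edges G2" by (rule op_hom_edge_image[OF G1 f])
    show "card ((`) f ` edges G1) = card (edges G2)"
      using card_image[OF inj_edges] inj_op_hom_card_le(2)[OF G1 G2 f inj] card_edges by simp
  qed
  fix i j assume ij: "i \<in> verts G1" "j \<in> verts G1" and "{f i, f j} \<in> edges G2"
  then obtain e where e: "e \<in> edges G1" "f ` e = f ` {i, j}"
    using edges_onto by (metis image_empty image_insert imageE)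
  have "{i, j} \<in> Pow (verts G1)" and "e \<in> Pow (verts G1)"
    using ij is_graph_edge_subset[OF G1 e(1)] by auto
  then have "e = {i, j}" using inj_on_image_Pow[OF inj] e(2) unfolding inj_on_def by blast
  then show "{i, j} \<in> edges G1" using e(1) by simp
qed

theorem proposition4p3:
  fixes G1 G2 :: ograph
  assumes "ordered_core G1" and "ordered_core G2"
    and "\<exists>f. op_hom G1 G2 f" and "\<exists>g. op_hom G2 G1 g"
  shows "\<exists>h. op_iso G1 G2 h"
proof -
  obtain f g where f: "op_hom G1 G2 f" and g: "op_hom G2 G1 g" using assms(3,4) by blast
  have G1: "is_graph G1" and G2: "is_graph G2"
    using assms(1,2) unfolding ordered_core_def by simp_all
  have inj_f: "inj_on f (verts G1)" by (rule ordered_core_hom_inj[OF assms(1) f g])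
  have inj_g: "inj_on g (verts G2)" by (rule ordered_core_hom_inj[OF assms(2) g f])
  have "op_iso G1 G2 f"
    using inj_op_hom_is_op_iso[OF G1 G2 f inj_f inj_op_hom_card_le[OF G2 G1 g inj_g]] .
  then show ?thesis by blast
qed

end
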